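(* Let $s$ be a positive integer and let $G$ be an $n$-vertex $K_{s,s}$-free graph. If $e(G)>6^s s\cdot n^{3/2}$, then the number of induced copies of the $4$-cycle $C_4$ in $G$ is at least $\frac{e(G)^4}{16n^4}$.
   Context: $G$ is $K_{s,s}$-free if it contains no copy of $K_{s,s}$ as a subgraph. An induced copy of $C_4$ is a set of four vertices $u,x,v,y$ with $ux,xv,vy,yu\in E(G)$ and $uv,xy\notin E(G)$ (counted as unlabeled subgraphs). *)

theory Defs
  imports Complex_Main
begin

definition simple_graph :: "'a set \<Rightarrow> 'a set set \<Rightarrow> bool" where
  "simple_graph V E \<longleftrightarrow> finite V \<and> (\<forall>e\<in>E. e \<subseteq> V \<and> card e = 2)"

abbreviation adj :: "'a set set \<Rightarrow> 'a \<Rightarrow> 'a \<Rightarrow> bool" where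
  "adj E u v \<equiv> {u, v} \<in> E"

definition Kss_free :: "'a set \<Rightarrow> 'a set set \<Rightarrow> nat \<Rightarrow> bool" where
  "Kss_free V E s \<longleftrightarrow> \<not> (\<exists>A B. A \<subseteq> V \<and> B \<subseteq> V \<and> A \<inter> B = {} \<and>
       card A = s \<and> card B = s \<and> (\<forall>a\<in>A. \<forall>b\<in>B. adj E a b))"

text \<open>Induced 4-cycles, counted as unlabeled subgraphs, i.e. as 4-vertex sets
  {u,x,v,y} with ux, xv, vy, yu edges and uv, xy non-edges.\<close>
definition induced_C4s :: "'a set \<Rightarrow> 'a set set \<Rightarrow> 'a set set" where
  "induced_C4s V E = {S. \<exists>u x v y. S = {u, x, v, y} \<and> card S = 4 \<and>
      u \<in> V \<and> x \<in> V \<and> v \<in> V \<and> y \<in> V \<and>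
      adj E u x \<and> adj E x v \<and> adj E v y \<and> adj E y u \<and>
      \<not> adj E u v \<and> \<not> adj E x y}"

definition num_induced_C4 :: "'a set \<Rightarrow> 'a set set \<Rightarrow> nat" where
  "num_induced_C4 V E = card (induced_C4s V E)"

end

theory Submission
  imports Defs "HOL-Analysis.Convex"
begin

text \<open>
  An induced 4-cycle is read off from its two diagonals: a non-adjacent pair u \<noteq> v and two
  distinct non-adjacent common neighbours x, y of u and v. If u and v have c common neighbours,
  a ordered pairs of which are adjacent, this leaves c^2 - c - a choices of (x, y). Summing over
  all pairs u \<noteq> v overcounts by the adjacent pairs u v, whose contribution is at most \<Sum> a
  because an edge with two common neighbours can be counted from either side; so there are at
  least \<Sum> c^2 - \<Sum> c - 2 \<Sum> a labelled induced 4-cycles. In a K_{s,s}-free graph any s - 1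
  vertices of a common neighbourhood have at most s - 1 common neighbours inside it, and a
  Kovari-Sos-Turan type count gives a \<le> c^2/8 + s 16^s c, so the count is at least
  3/4 \<Sum> c^2 - O(\<Sum> c). Finally \<Sum> c = \<Sum> d(w)^2 - \<Sum> d(w) \<ge> 3 e(G)^2 / n and
  \<Sum> c^2 \<ge> (\<Sum> c)^2 / n^2 by Cauchy-Schwarz, and the edge density hypothesis makes the linear
  error term negligible.
\<close>

definition distinct_pairs :: "'a set \<Rightarrow> ('a \<times> 'a) set" where
  "distinct_pairs A = {(x, y) \<in> A \<times> A. x \<noteq> y}"

lemma finite_distinct_pairs: "finite A \<Longrightarrow> finite (distinct_pairs A)"
  unfolding distinct_pairs_def by (auto intro: finite_subset[of _ "A \<times> A"])

lemma card_distinct_pairs: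
  assumes "finite A"
  shows "real (card (distinct_pairs A)) = real (card A) ^ 2 - real (card A)"
proof -
  have "distinct_pairs A = Sigma A (\<lambda>x. A - {x})"
    unfolding distinct_pairs_def by auto
  then have "card (distinct_pairs A) = card A * (card A - 1)"
    using assms by (simp add: card_Diff_singleton)
  then show ?thesis
    by (cases "card A") (simp_all add: power2_eq_square algebra_simps)
qed

lemma card_Sigma_case_prod:
  assumes "finite A" "\<And>x y. finite (B x y)"
  shows "card (Sigma A (\<lambda>(x, y). B x y)) = (\<Sum>(x, y)\<in>A. card (B x y))"
  using assms by (subst card_SigmaI) (simp_all add: case_prod_unfold)

lemma card_le_mult_card_image:
  assumes "finite A" "\<And>b. b \<in> f ` A \<Longrightarrow> card {a\<in>A. f a = b} \<le> k"
  shows "card A \<le> k * card (f ` A)"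
proof -
  have "A = (\<Union>b\<in>f ` A. {a\<in>A. f a = b})"
    by auto
  then have "card A \<le> (\<Sum>b\<in>f ` A. card {a\<in>A. f a = b})"
    using card_UN_le[of "f ` A" "\<lambda>b. {a\<in>A. f a = b}"] \<open>finite A\<close> by simp
  also have "\<dots> \<le> k * card (f ` A)"
    using sum_bounded_above[of "f ` A" "\<lambda>b. card {a\<in>A. f a = b}" k] assms(2) by (simp add: mult.commute)
  finally show ?thesis .
qed

lemma binomial_mult_power_le:
  fixes c t k :: nat
  assumes "2 * k \<le> t" "t \<le> c"
  shows "(c choose k) * t ^ k \<le> (2 * c) ^ k * (t choose k)"
  using assms
proof (induction k)
  case 0
  then show ?case by simp
next
  case (Suc k)
  have absorb: "(m choose Suc k) * Suc k = (m choose k) * (m - k)" for m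
    using binomial_absorption[of k m] binomial_absorb_comp[of m k] by (simp add: mult.commute)
  have IH: "(c choose k) * t ^ k \<le> (2 * c) ^ k * (t choose k)"
    using Suc by simp
  have "(c - k) * t \<le> c * (2 * (t - k))"
    using Suc.prems by (intro order.trans[OF mult_le_mono1[of "c - k" c] mult_le_mono2]) simp_all
  have "(c choose Suc k) * t ^ Suc k * Suc k = ((c choose Suc k) * Suc k) * t ^ Suc k"
    by (simp only: ac_simps)
  also have "\<dots> = ((c choose k) * t ^ k) * ((c - k) * t)"
    unfolding absorb by (simp add: ac_simps)
  also have "\<dots> \<le> ((2 * c) ^ k * (t choose k)) * (c * (2 * (t - k)))"
    using IH \<open>(c - k) * t \<le> c * (2 * (t - k))\<close> by (rule mult_le_mono)
  also have "\<dots> = (2 * c) ^ Suc k * ((t choose k) * (t - k))"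
    by (simp add: ac_simps)
  also have "\<dots> = (2 * c) ^ Suc k * (t choose Suc k) * Suc k"
    unfolding absorb[symmetric] by (simp add: algebra_simps)
  finally show ?case
    by (simp only: mult_le_cancel2)
qed

lemma sum_choose_card_related_le:
  fixes R :: "'a \<Rightarrow> 'a \<Rightarrow> bool"
  assumes "finite C"
    and few_common: "\<And>Z. Z \<subseteq> C \<Longrightarrow> card Z = k \<Longrightarrow> card {x\<in>C. \<forall>z\<in>Z. R x z} \<le> k"
  shows "(\<Sum>x\<in>C. card {y\<in>C. R x y} choose k) \<le> k * (card C choose k)"
proof -
  define Zs where "Zs = {Z. Z \<subseteq> C \<and> card Z = k}"
  have "finite Zs"
    unfolding Zs_def using \<open>finite C\<close> by simp
  have "card {y\<in>C. R x y} choose k = (\<Sum>Z\<in>Zs. of_bool (\<forall>z\<in>Z. R x z))" for x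
  proof -
    have "card {y\<in>C. R x y} choose k = card {Z. Z \<subseteq> {y\<in>C. R x y} \<and> card Z = k}"
      using n_subsets[of "{y\<in>C. R x y}" k] \<open>finite C\<close> by simp
    also have "{Z. Z \<subseteq> {y\<in>C. R x y} \<and> card Z = k} = Zs \<inter> {Z. \<forall>z\<in>Z. R x z}"
      unfolding Zs_def by auto
    finally show ?thesis
      using \<open>finite Zs\<close> by simp
  qed
  then have "(\<Sum>x\<in>C. card {y\<in>C. R x y} choose k) = (\<Sum>Z\<in>Zs. \<Sum>x\<in>C. of_bool (\<forall>z\<in>Z. R x z))"
    by (simp add: sum.swap[of _ Zs])
  also have "\<dots> \<le> (\<Sum>Z\<in>Zs. k)"
  proof (rule sum_mono)
    fix Z assume "Z \<in> Zs"
    then have "card {x\<in>C. \<forall>z\<in>Z. R x z} \<le> k"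
      using few_common[of Z] by (simp add: Zs_def)
    then show "(\<Sum>x\<in>C. of_bool (\<forall>z\<in>Z. R x z)) \<le> k"
      using \<open>finite C\<close> by (simp add: Int_def conj_commute)
  qed
  also have "\<dots> = k * (card C choose k)"
    unfolding Zs_def using n_subsets[OF \<open>finite C\<close>] by simp
  finally show ?thesis .
qed

lemma card_highly_related_le:
  fixes R :: "'a \<Rightarrow> 'a \<Rightarrow> bool"
  assumes "finite C"
    and few_common: "\<And>Z. Z \<subseteq> C \<Longrightarrow> card Z = k \<Longrightarrow> card {x\<in>C. \<forall>z\<in>Z. R x z} \<le> k"
    and "2 * k \<le> t" "t \<le> card C" "card C \<le> 8 * t"
  shows "card {x\<in>C. t \<le> card {y\<in>C. R x y}} \<le> k * 16 ^ k"
proof -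
  define T where "T = {x\<in>C. t \<le> card {y\<in>C. R x y}}"
  have "card T * (t choose k) = (\<Sum>x\<in>T. t choose k)"
    by simp
  also have "\<dots> \<le> (\<Sum>x\<in>C. card {y\<in>C. R x y} choose k)"
    using \<open>finite C\<close>
    by (intro order.trans[OF sum_mono sum_mono2]) (auto simp: T_def intro: binomial_right_mono)
  also have "\<dots> \<le> k * (card C choose k)"
    using assms(1,2) by (rule sum_choose_card_related_le)
  finally have "card T * (t choose k) * t ^ k \<le> k * ((card C choose k) * t ^ k)"
    by (simp add: ac_simps)
  also have "\<dots> \<le> k * ((2 * card C) ^ k * (t choose k))"
    using binomial_mult_power_le[OF assms(3,4)] by simp
  also have "\<dots> \<le> k * ((16 * t) ^ k * (t choose k))"
    using \<open>card C \<le> 8 * t\<close> by (intro mult_le_mono2 mult_le_mono1 power_mono) simp_all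
  finally have "card T * (t ^ k * (t choose k)) \<le> (k * 16 ^ k) * (t ^ k * (t choose k))"
    by (simp add: power_mult_distrib ac_simps)
  moreover have "0 < t ^ k * (t choose k)"
    using \<open>2 * k \<le> t\<close> by (cases k) simp_all
  ultimately show ?thesis
    unfolding T_def using mult_le_cancel2 by blast
qed

text \<open>At most k 16^k elements have more than c/8 related elements; the others contribute
  at most c/8 each.\<close>

lemma sum_card_related_le:
  fixes R :: "'a \<Rightarrow> 'a \<Rightarrow> bool"
  assumes "finite C"
    and few_common: "\<And>Z. Z \<subseteq> C \<Longrightarrow> card Z = k \<Longrightarrow> card {x\<in>C. \<forall>z\<in>Z. R x z} \<le> k"
    and "1 \<le> k"
  shows "real (\<Sum>x\<in>C. card {y\<in>C. R x y}) \<le> real (card C) ^ 2 / 8 + real (k * 16 ^ k) * real (card C)"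
proof -
  define c where "c = card C"
  define d where "d x = card {y\<in>C. R x y}" for x
  define t where "t = c div 8 + 1"
  define T where "T = {x\<in>C. t \<le> d x}"
  have "card T \<le> k * 16 ^ k"
  proof (cases "16 * k \<le> c")
    case True
    then have "2 * k \<le> t" "t \<le> c"
      using \<open>1 \<le> k\<close> unfolding t_def by linarith+
    moreover have "c \<le> 8 * t"
      using div_mult_mod_eq[of c 8] mod_less_divisor[of 8 c] unfolding t_def by simp
    ultimately show ?thesis
      unfolding T_def d_def c_def by (intro card_highly_related_le[OF \<open>finite C\<close> few_common])
  next
    case False
    have "card T \<le> 16 * k"
      using False \<open>finite C\<close> card_mono[of C T] unfolding T_def c_def by auto
    also have "\<dots> \<le> k * 16 ^ k"
      using \<open>1 \<le> k\<close> by (simp add: self_le_power)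
    finally show ?thesis .
  qed
  have "(\<Sum>x\<in>C. d x) = (\<Sum>x\<in>T. d x) + (\<Sum>x\<in>C - T. d x)"
    using sum.subset_diff[of T C d] \<open>finite C\<close> by (simp add: T_def add.commute)
  also have "\<dots> \<le> card T * c + card (C - T) * (c div 8)"
  proof (rule add_mono)
    show "(\<Sum>x\<in>T. d x) \<le> card T * c"
      using sum_bounded_above[of T d c] \<open>finite C\<close> unfolding c_def d_def by (simp add: card_mono)
    show "(\<Sum>x\<in>C - T. d x) \<le> card (C - T) * (c div 8)"
      using sum_bounded_above[of "C - T" d "c div 8"] unfolding T_def t_def by force
  qed
  also have "\<dots> \<le> k * 16 ^ k * c + c * (c div 8)"
    using \<open>card T \<le> k * 16 ^ k\<close> \<open>finite C\<close>
    by (intro add_mono mult_le_mono1) (simp_all add: c_def card_mono)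
  finally have "real (\<Sum>x\<in>C. d x) \<le> real (k * 16 ^ k) * real c + real c * real (c div 8)"
    by (metis of_nat_add of_nat_le_iff of_nat_mult)
  also have "real c * real (c div 8) \<le> real c * (real c / 8)"
    by (intro mult_left_mono) (simp_all add: real_of_nat_div)
  finally show ?thesis
    unfolding c_def d_def by (simp add: power2_eq_square)
qed

lemma sixteen_pow_le_six_pow_sq:
  assumes "2 \<le> s"
  shows "4 * (1 + 2 * real (s * 16 ^ s)) \<le> 3 * (6 ^ s * real s) ^ 2"
proof -
  have "2 * 16 ^ s \<le> (2 :: nat) ^ s * 16 ^ s"
    using assms by (intro mult_right_mono) (simp_all add: self_le_power)
  also have "\<dots> \<le> 36 ^ s"
    by (simp flip: power_mult_distrib add: power_mono)
  finally have "4 * 16 ^ s \<le> s * 36 ^ s"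
    using assms mult_le_mono[of 2 s "2 * 16 ^ s" "36 ^ s"] by simp
  have "4 * (1 + 2 * (s * 16 ^ s)) \<le> 3 * s * (4 * 16 ^ s)"
    using assms by simp
  also have "\<dots> \<le> 3 * s * (s * 36 ^ s)"
    using \<open>4 * 16 ^ s \<le> s * 36 ^ s\<close> by simp
  finally have "4 * (1 + 2 * (s * 16 ^ s)) \<le> 3 * s * (s * 36 ^ s)" .
  then have "real (4 * (1 + 2 * (s * 16 ^ s))) \<le> real (3 * s * (s * 36 ^ s))"
    by (simp only: of_nat_le_iff)
  moreover have "(36 :: real) ^ s = 6 ^ s * 6 ^ s"
    by (simp flip: power_mult_distrib)
  ultimately show ?thesis
    by (simp add: power2_eq_square ac_simps)
qed

lemma powr_three_halves_bounds:
  fixes K n e :: real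
  assumes "1 \<le> n" "2 \<le> K" "K * n powr (3 / 2) < e"
  shows "2 * n \<le> e" "K ^ 2 * n ^ 3 \<le> e ^ 2"
proof -
  have "n \<le> n powr (3 / 2)"
    using powr_mono[of 1 "3 / 2" n] assms(1) by simp
  then show "2 * n \<le> e"
    using assms mult_mono[of 2 K n "n powr (3 / 2)"] by simp
  have "(n powr (3 / 2)) ^ 2 = n powr (real 2 * (3 / 2))"
    using assms(1) by (intro powr_power) simp
  also have "\<dots> = n ^ 3"
    using assms(1) by (simp add: powr_realpow)
  finally have "(n powr (3 / 2)) ^ 2 = n ^ 3" .
  moreover have "(K * n powr (3 / 2)) ^ 2 \<le> e ^ 2"
    using assms by (intro power_mono) simp_all
  ultimately show "K ^ 2 * n ^ 3 \<le> e ^ 2"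
    by (simp add: power_mult_distrib)
qed

locale sgraph =
  fixes V :: "'a set" and E :: "'a set set"
  assumes simple_graph: "simple_graph V E"
begin

lemma finite_vertices: "finite V"
  using simple_graph unfolding simple_graph_def by simp

lemma finite_edges: "finite E"
proof -
  have "E \<subseteq> Pow V"
    using simple_graph unfolding simple_graph_def by auto
  then show ?thesis
    using finite_vertices by (simp add: finite_subset)
qed

lemma adj_in_vertices: "adj E u v \<Longrightarrow> u \<in> V \<and> v \<in> V"
  using simple_graph unfolding simple_graph_def by auto

lemma adj_distinct: "adj E u v \<Longrightarrow> u \<noteq> v"
  using simple_graph unfolding simple_graph_def by fastforce

lemma card_vertices_pos: "E \<noteq> {} \<Longrightarrow> 0 < card V"
  using simple_graph finite_vertices unfolding simple_graph_def by (fastforce simp: card_gt_0_iff)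

lemma adj_commute: "adj E u v \<longleftrightarrow> adj E v u"
  by (simp add: insert_commute)

definition nbhd :: "'a \<Rightarrow> 'a set" where
  "nbhd u = {w \<in> V. adj E u w}"

definition common_nbhd :: "'a \<Rightarrow> 'a \<Rightarrow> 'a set" where
  "common_nbhd u v = nbhd u \<inter> nbhd v"

definition edge_pairs :: "'a set \<Rightarrow> ('a \<times> 'a) set" where
  "edge_pairs A = {(x, y) \<in> A \<times> A. adj E x y}"

lemma finite_nbhd: "finite (nbhd u)"
  unfolding nbhd_def using finite_vertices by simp

lemma finite_common_nbhd: "finite (common_nbhd u v)"
  unfolding common_nbhd_def using finite_nbhd by simp

lemma edge_pairs_subset_distinct_pairs: "edge_pairs A \<subseteq> distinct_pairs A"
  unfolding edge_pairs_def distinct_pairs_def using adj_distinct by auto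

lemma finite_edge_pairs: "finite A \<Longrightarrow> finite (edge_pairs A)"
  using finite_distinct_pairs edge_pairs_subset_distinct_pairs by (rule finite_subset[rotated])

lemma card_edge_pairs:
  assumes "finite A"
  shows "card (edge_pairs A) = (\<Sum>x\<in>A. card {y\<in>A. adj E x y})"
proof -
  have "edge_pairs A = Sigma A (\<lambda>x. {y\<in>A. adj E x y})"
    unfolding edge_pairs_def by auto
  then show ?thesis
    using assms by simp
qed

lemma card_edge_pairs_vertices: "card (edge_pairs V) = 2 * card E"
proof -
  have "edge_pairs V = (\<Union>e\<in>E. {(u, w). {u, w} = e})"
    unfolding edge_pairs_def using simple_graph unfolding simple_graph_def by auto
  moreover have "card {(u, w). {u, w} = e} = 2" if "e \<in> E" for e
  proof -
    obtain a b where "e = {a, b}" "a \<noteq> b"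
      using simple_graph \<open>e \<in> E\<close> unfolding simple_graph_def by (meson card_2_iff)
    then have "{(u, w). {u, w} = e} = {(a, b), (b, a)}"
      by (auto simp: doubleton_eq_iff)
    then show ?thesis
      using \<open>a \<noteq> b\<close> by simp
  qed
  moreover have "card (\<Union>e\<in>E. {(u, w). {u, w} = e}) = (\<Sum>e\<in>E. card {(u, w). {u, w} = e})"
    using calculation(2) finite_edges by (intro card_UN_disjoint) (auto intro: card_ge_0_finite)
  ultimately show ?thesis
    by simp
qed

lemma sum_card_nbhd: "(\<Sum>w\<in>V. card (nbhd w)) = 2 * card E"
  using card_edge_pairs[OF finite_vertices] card_edge_pairs_vertices by (simp add: nbhd_def)

lemma sum_card_common_nbhd:
  "(\<Sum>(u, v)\<in>distinct_pairs V. real (card (common_nbhd u v)))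
     = (\<Sum>w\<in>V. real (card (nbhd w)) ^ 2) - (\<Sum>w\<in>V. real (card (nbhd w)))"
proof -
  let ?X = "Sigma (distinct_pairs V) (\<lambda>(u, v). common_nbhd u v)"
  let ?Y = "Sigma V (\<lambda>w. distinct_pairs (nbhd w))"
  have "?Y = ?X\<inverse>"
    unfolding distinct_pairs_def common_nbhd_def nbhd_def using adj_in_vertices adj_commute by auto
  then have "card ?X = card ?Y"
    by simp
  moreover have "card ?X = (\<Sum>(u, v)\<in>distinct_pairs V. card (common_nbhd u v))"
    using finite_distinct_pairs[OF finite_vertices] finite_common_nbhd by (rule card_Sigma_case_prod)
  moreover have "card ?Y = (\<Sum>w\<in>V. card (distinct_pairs (nbhd w)))"
    using finite_vertices finite_distinct_pairs[OF finite_nbhd] by simp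
  ultimately have "(\<Sum>(u, v)\<in>distinct_pairs V. card (common_nbhd u v))
      = (\<Sum>w\<in>V. card (distinct_pairs (nbhd w)))"
    by simp
  from arg_cong[OF this, of real]
  have "(\<Sum>(u, v)\<in>distinct_pairs V. real (card (common_nbhd u v)))
      = (\<Sum>w\<in>V. real (card (distinct_pairs (nbhd w))))"
    by (simp add: case_prod_unfold)
  then show ?thesis
    by (simp add: card_distinct_pairs finite_nbhd sum_subtractf)
qed

text \<open>Both sides count the pairs (p, q) of an edge p and a pair q of distinct vertices
  such that every vertex of p is adjacent to every vertex of q.\<close>

lemma sum_edges_card_distinct_pairs_common_nbhd:
  "(\<Sum>(u, v)\<in>edge_pairs V. card (distinct_pairs (common_nbhd u v)))
     = (\<Sum>(u, v)\<in>distinct_pairs V. card (edge_pairs (common_nbhd u v)))"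
proof -
  let ?X = "Sigma (edge_pairs V) (\<lambda>(u, v). distinct_pairs (common_nbhd u v))"
  let ?Y = "Sigma (distinct_pairs V) (\<lambda>(u, v). edge_pairs (common_nbhd u v))"
  have "?Y = ?X\<inverse>"
    unfolding distinct_pairs_def edge_pairs_def common_nbhd_def nbhd_def
    using adj_in_vertices adj_commute by auto
  then have "card ?X = card ?Y"
    by simp
  moreover have "card ?X = (\<Sum>(u, v)\<in>edge_pairs V. card (distinct_pairs (common_nbhd u v)))"
    using finite_edge_pairs[OF finite_vertices] finite_distinct_pairs[OF finite_common_nbhd]
    by (rule card_Sigma_case_prod)
  moreover have "card ?Y = (\<Sum>(u, v)\<in>distinct_pairs V. card (edge_pairs (common_nbhd u v)))"
    using finite_distinct_pairs[OF finite_vertices] finite_edge_pairs[OF finite_common_nbhd]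
    by (rule card_Sigma_case_prod)
  ultimately show ?thesis
    by simp
qed

text \<open>((u, v), (x, y)) stands for the induced 4-cycle u x v y with diagonals uv and xy.\<close>

definition induced_C4_tuples :: "(('a \<times> 'a) \<times> ('a \<times> 'a)) set" where
  "induced_C4_tuples = Sigma (distinct_pairs V - edge_pairs V)
     (\<lambda>(u, v). distinct_pairs (common_nbhd u v) - edge_pairs (common_nbhd u v))"

lemma mem_induced_C4_tuples:
  "((u, v), (x, y)) \<in> induced_C4_tuples \<longleftrightarrow>
     u \<in> V \<and> v \<in> V \<and> u \<noteq> v \<and> x \<noteq> y \<and> \<not> adj E u v \<and> \<not> adj E x y \<and>
     adj E u x \<and> adj E v x \<and> adj E u y \<and> adj E v y"
  unfolding induced_C4_tuples_def distinct_pairs_def edge_pairs_def common_nbhd_def nbhd_def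
  using adj_in_vertices by (auto simp: adj_commute)

lemma card_induced_C4_tuples_ge:
  "(\<Sum>(u, v)\<in>distinct_pairs V. real (card (common_nbhd u v)) ^ 2)
     - (\<Sum>(u, v)\<in>distinct_pairs V. real (card (common_nbhd u v)))
     - 2 * (\<Sum>(u, v)\<in>distinct_pairs V. real (card (edge_pairs (common_nbhd u v))))
   \<le> real (card induced_C4_tuples)"
proof -
  define D where "D = distinct_pairs V"
  define p where "p u v = real (card (distinct_pairs (common_nbhd u v)))" for u v
  define a where "a u v = real (card (edge_pairs (common_nbhd u v)))" for u v
  have "finite D"
    unfolding D_def using finite_vertices by (rule finite_distinct_pairs)
  have "edge_pairs V \<subseteq> D"
    unfolding D_def by (rule edge_pairs_subset_distinct_pairs)
  have "real (card induced_C4_tuples) = (\<Sum>(u, v)\<in>D - edge_pairs V. p u v - a u v)"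
    unfolding induced_C4_tuples_def D_def p_def a_def
    using finite_distinct_pairs[OF finite_vertices] finite_distinct_pairs[OF finite_common_nbhd]
      finite_edge_pairs[OF finite_common_nbhd] edge_pairs_subset_distinct_pairs
    by (simp add: card_Sigma_case_prod card_Diff_subset of_nat_diff card_mono case_prod_unfold)
  also have "\<dots> = (\<Sum>(u, v)\<in>D. p u v - a u v) - (\<Sum>(u, v)\<in>edge_pairs V. p u v - a u v)"
    using \<open>finite D\<close> \<open>edge_pairs V \<subseteq> D\<close> by (rule sum_diff)
  also have "\<dots> \<ge> (\<Sum>(u, v)\<in>D. p u v - a u v) - (\<Sum>(u, v)\<in>edge_pairs V. p u v)"
    by (intro diff_left_mono sum_mono) (auto simp: a_def)
  also have "(\<Sum>(u, v)\<in>edge_pairs V. p u v) = (\<Sum>(u, v)\<in>D. a u v)"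
    using arg_cong[OF sum_edges_card_distinct_pairs_common_nbhd, of real]
    unfolding p_def a_def D_def by (simp add: case_prod_unfold)
  finally have "(\<Sum>(u, v)\<in>D. p u v - a u v) - (\<Sum>(u, v)\<in>D. a u v) \<le> real (card induced_C4_tuples)" .
  then show ?thesis
    unfolding D_def p_def a_def
    by (simp add: card_distinct_pairs finite_common_nbhd case_prod_unfold sum_subtractf)
qed

lemma induced_C4_of_tuple:
  assumes "((u, v), (x, y)) \<in> induced_C4_tuples"
  shows "{u, x, v, y} \<in> induced_C4s V E"
proof -
  have adj: "adj E u x" "adj E x v" "adj E v y" "adj E y u" "\<not> adj E u v" "\<not> adj E x y"
    using assms adj_commute unfolding mem_induced_C4_tuples by blast+
  then have "u \<in> V" "x \<in> V" "v \<in> V" "y \<in> V"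
    using adj_in_vertices by blast+
  have "u \<noteq> x" "v \<noteq> x" "u \<noteq> y" "v \<noteq> y"
    using adj adj_distinct by blast+
  moreover have "u \<noteq> v" "x \<noteq> y"
    using assms unfolding mem_induced_C4_tuples by simp_all
  ultimately have "card {u, x, v, y} = 4"
    by simp
  then show ?thesis
    unfolding induced_C4s_def using adj \<open>u \<in> V\<close> \<open>x \<in> V\<close> \<open>v \<in> V\<close> \<open>y \<in> V\<close> by blast
qed

lemma induced_C4_tuple_last_determined:
  assumes "((u, v), (x, y)) \<in> induced_C4_tuples" "((u, v), (x, y')) \<in> induced_C4_tuples"
    and "{u, x, v, y} = {u, x, v, y'}"
  shows "y = y'"
proof -
  have "y \<in> {u, x, v, y'}" "y \<notin> {u, x, v}"
    using assms adj_distinct unfolding mem_induced_C4_tuples by auto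
  then show ?thesis
    by blast
qed

text \<open>Each induced 4-cycle arises from exactly 8 tuples; the cruder factor 64 only uses that
  (u, v, x) determines the tuple.\<close>

lemma card_induced_C4_tuples_le: "card induced_C4_tuples \<le> 64 * num_induced_C4 V E"
proof -
  define C4 :: "('a \<times> 'a) \<times> 'a \<times> 'a \<Rightarrow> 'a set" where "C4 = (\<lambda>((u, v), (x, y)). {u, x, v, y})"
  have "finite induced_C4_tuples"
    unfolding induced_C4_tuples_def
    using finite_distinct_pairs[OF finite_vertices] finite_distinct_pairs[OF finite_common_nbhd]
    by auto
  have image: "C4 ` induced_C4_tuples \<subseteq> induced_C4s V E"
    unfolding C4_def using induced_C4_of_tuple by auto
  have "card {q \<in> induced_C4_tuples. C4 q = S} \<le> 64" if "S \<in> C4 ` induced_C4_tuples" for S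
  proof -
    let ?F = "{q \<in> induced_C4_tuples. C4 q = S}"
    have "card S = 4"
      using image that unfolding induced_C4s_def by auto
    have "inj_on (\<lambda>((u, v), (x, y)). (u, v, x)) ?F"
      using induced_C4_tuple_last_determined by (auto simp: inj_on_def C4_def)
    moreover have "(\<lambda>((u, v), (x, y)). (u, v, x)) ` ?F \<subseteq> S \<times> S \<times> S"
      unfolding C4_def by auto
    moreover have "finite S"
      using \<open>card S = 4\<close> card_ge_0_finite[of S] by simp
    ultimately have "card ?F \<le> card (S \<times> S \<times> S)"
      by (intro card_inj_on_le) simp_all
    then show ?thesis
      using \<open>card S = 4\<close> by (simp add: card_cartesian_product)
  qed
  then have "card induced_C4_tuples \<le> 64 * card (C4 ` induced_C4_tuples)"
    by (rule card_le_mult_card_image[OF \<open>finite induced_C4_tuples\<close>])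
  also have "\<dots> \<le> 64 * num_induced_C4 V E"
    unfolding num_induced_C4_def
    using image by (intro mult_le_mono2 card_mono) (auto simp: induced_C4s_def finite_vertices intro: finite_subset[of _ "Pow V"])
  finally show ?thesis .
qed

lemma Kss_free_one_imp_no_edges:
  assumes "Kss_free V E 1"
  shows "E = {}"
proof
  show "E \<subseteq> {}"
  proof
    fix e assume "e \<in> E"
    then obtain a b where "e = {a, b}" "a \<noteq> b"
      using simple_graph unfolding simple_graph_def by (meson card_2_iff)
    then have "{a} \<subseteq> V \<and> {b} \<subseteq> V \<and> {a} \<inter> {b} = {} \<and> card {a} = 1 \<and> card {b} = 1 \<and>
        (\<forall>x\<in>{a}. \<forall>y\<in>{b}. adj E x y)"
      using \<open>e \<in> E\<close> adj_in_vertices by auto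
    then show "e \<in> {}"
      using assms unfolding Kss_free_def by blast
  qed
qed simp

text \<open>Otherwise u, Z and s such common neighbours would span a K_{s,s}.\<close>

lemma Kss_free_common_nbhd_few_common:
  assumes "Kss_free V E s" "2 \<le> s" "Z \<subseteq> common_nbhd u v" "card Z = s - 1"
  shows "card {x \<in> common_nbhd u v. \<forall>z\<in>Z. adj E x z} \<le> s - 1"
proof (rule ccontr)
  assume "\<not> ?thesis"
  then have "s \<le> card {x \<in> common_nbhd u v. \<forall>z\<in>Z. adj E x z}"
    by simp
  then obtain B where B: "B \<subseteq> {x \<in> common_nbhd u v. \<forall>z\<in>Z. adj E x z}" "card B = s"
    by (rule obtain_subset_with_card_n)
  define A where "A = insert u Z"
  have "finite Z"
    using assms(3) finite_common_nbhd by (rule finite_subset)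
  have "u \<notin> Z"
    using assms(3) adj_distinct unfolding common_nbhd_def nbhd_def by blast
  then have "card A = s"
    unfolding A_def using \<open>finite Z\<close> assms(2,4) by simp
  have "B \<noteq> {}"
    using B(2) assms(2) by auto
  then have "u \<in> V"
    using B(1) adj_in_vertices unfolding common_nbhd_def nbhd_def by blast
  then have "A \<subseteq> V" "B \<subseteq> V"
    using assms(3) B(1) unfolding A_def common_nbhd_def nbhd_def by auto
  moreover have "A \<inter> B = {}"
    using B(1) adj_distinct unfolding A_def common_nbhd_def nbhd_def by blast
  moreover have "\<forall>a\<in>A. \<forall>b\<in>B. adj E a b"
  proof (intro ballI)
    fix a b assume "a \<in> A" "b \<in> B"
    then have "a = u \<or> a \<in> Z" "adj E u b" "\<forall>z\<in>Z. adj E b z"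
      using B(1) unfolding A_def common_nbhd_def nbhd_def by auto
    then show "adj E a b"
      using adj_commute by blast
  qed
  ultimately show False
    using assms(1) \<open>card A = s\<close> \<open>card B = s\<close> unfolding Kss_free_def by blast
qed

lemma card_edge_pairs_common_nbhd_le:
  assumes "Kss_free V E s" "2 \<le> s"
  shows "real (card (edge_pairs (common_nbhd u v)))
    \<le> real (card (common_nbhd u v)) ^ 2 / 8 + real (s * 16 ^ s) * real (card (common_nbhd u v))"
proof -
  have "real (card (edge_pairs (common_nbhd u v)))
      \<le> real (card (common_nbhd u v)) ^ 2 / 8 + real ((s - 1) * 16 ^ (s - 1)) * real (card (common_nbhd u v))"
    unfolding card_edge_pairs[OF finite_common_nbhd]
    using Kss_free_common_nbhd_few_common[OF assms] assms(2)
    by (intro sum_card_related_le finite_common_nbhd) auto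
  also have "(s - 1) * 16 ^ (s - 1) \<le> s * 16 ^ s"
    by (intro mult_le_mono power_increasing) simp_all
  finally show ?thesis
    by (simp add: mult_right_mono)
qed

lemma edges_sq_le_sum_card_common_nbhd:
  defines "P \<equiv> (\<Sum>(u, v)\<in>distinct_pairs V. real (card (common_nbhd u v)))"
  assumes "2 * real (card V) \<le> real (card E)"
  shows "3 * real (card E) ^ 2 \<le> real (card V) * P"
proof -
  define n where "n = real (card V)"
  define e where "e = real (card E)"
  define d where "d w = real (card (nbhd w))" for w
  have "(\<Sum>w\<in>V. d w) = 2 * e"
    unfolding d_def e_def using arg_cong[OF sum_card_nbhd, of real] by simp
  moreover have "(\<Sum>w\<in>V. d w) ^ 2 \<le> n * (\<Sum>w\<in>V. d w ^ 2)"
    unfolding n_def using sum_squared_le_sum_of_squares[of d V] by (simp add: mult.commute)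
  ultimately have "4 * e ^ 2 - n * (2 * e) \<le> n * P"
    unfolding P_def sum_card_common_nbhd d_def by (simp add: right_diff_distrib power_mult_distrib)
  moreover have "n * (2 * e) \<le> e ^ 2"
    using mult_right_mono[OF assms(2), of e] unfolding n_def e_def power2_eq_square by (simp add: ac_simps)
  ultimately show ?thesis
    unfolding n_def e_def by linarith
qed

lemma sum_card_common_nbhd_sq_le:
  "(\<Sum>(u, v)\<in>distinct_pairs V. real (card (common_nbhd u v))) ^ 2
     \<le> real (card V) ^ 2 * (\<Sum>(u, v)\<in>distinct_pairs V. real (card (common_nbhd u v)) ^ 2)"
proof -
  define S where "S = (\<Sum>(u, v)\<in>distinct_pairs V. real (card (common_nbhd u v)) ^ 2)"
  have "(\<Sum>(u, v)\<in>distinct_pairs V. real (card (common_nbhd u v))) ^ 2 \<le> S * real (card (distinct_pairs V))"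
    unfolding S_def using sum_squared_le_sum_of_squares by (simp add: case_prod_unfold)
  also have "\<dots> \<le> S * real (card V) ^ 2"
    unfolding S_def using card_distinct_pairs[OF finite_vertices]
    by (intro mult_left_mono sum_nonneg) (simp_all add: case_prod_unfold)
  finally show ?thesis
    unfolding S_def by (simp add: mult.commute)
qed

lemma sum_card_edge_pairs_common_nbhd_le:
  assumes "Kss_free V E s" "2 \<le> s"
  shows "(\<Sum>(u, v)\<in>distinct_pairs V. real (card (edge_pairs (common_nbhd u v))))
    \<le> (\<Sum>(u, v)\<in>distinct_pairs V. real (card (common_nbhd u v)) ^ 2) / 8
      + real (s * 16 ^ s) * (\<Sum>(u, v)\<in>distinct_pairs V. real (card (common_nbhd u v)))"
  using card_edge_pairs_common_nbhd_le[OF assms]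
  by (simp add: sum_divide_distrib sum_distrib_left flip: sum.distrib) (intro sum_mono, auto)

lemma sum_card_common_nbhd_sq_le_induced_C4:
  defines "P \<equiv> (\<Sum>(u, v)\<in>distinct_pairs V. real (card (common_nbhd u v)))"
  assumes "Kss_free V E s" "2 \<le> s"
    and "4 * (1 + 2 * real (s * 16 ^ s)) * real (card V) ^ 2 \<le> P"
  shows "P ^ 2 \<le> 128 * real (card V) ^ 2 * real (num_induced_C4 V E)"
proof -
  define n where "n = real (card V)"
  define \<beta> where "\<beta> = real (s * 16 ^ s)"
  define q where "q = real (card induced_C4_tuples)"
  define S where "S = (\<Sum>(u, v)\<in>distinct_pairs V. real (card (common_nbhd u v)) ^ 2)"
  define T where "T = (\<Sum>(u, v)\<in>distinct_pairs V. real (card (edge_pairs (common_nbhd u v))))"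
  have "T \<le> S / 8 + \<beta> * P"
    unfolding S_def P_def T_def \<beta>_def by (rule sum_card_edge_pairs_common_nbhd_le[OF assms(2,3)])
  then have "S - P - 2 * (S / 8 + \<beta> * P) \<le> S - P - 2 * T"
    by simp
  also have "\<dots> \<le> q"
    unfolding S_def P_def T_def q_def by (rule card_induced_C4_tuples_ge)
  finally have "S - P - 2 * (S / 8 + \<beta> * P) \<le> q" .
  then have "(3 / 4 * S - (1 + 2 * \<beta>) * P) * n ^ 2 \<le> q * n ^ 2"
    by (intro mult_right_mono) (simp_all add: algebra_simps)
  moreover have "P ^ 2 \<le> n ^ 2 * S"
    unfolding P_def n_def S_def by (rule sum_card_common_nbhd_sq_le)
  moreover have "((1 + 2 * \<beta>) * n ^ 2) * P \<le> P / 4 * P"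
  proof (rule mult_right_mono)
    have "4 * ((1 + 2 * \<beta>) * n ^ 2) \<le> P"
      using assms(4) unfolding \<beta>_def n_def by (simp only: mult.assoc)
    then show "(1 + 2 * \<beta>) * n ^ 2 \<le> P / 4"
      by linarith
    show "0 \<le> P"
      unfolding P_def by (auto intro: sum_nonneg)
  qed
  ultimately have "P ^ 2 \<le> 2 * n ^ 2 * q"
    by (simp add: power2_eq_square algebra_simps)
  also have "\<dots> \<le> 2 * n ^ 2 * (64 * real (num_induced_C4 V E))"
    using card_induced_C4_tuples_le unfolding q_def
    by (intro mult_left_mono) (simp_all flip: of_nat_mult add: of_nat_le_iff)
  finally show ?thesis
    unfolding n_def by simp
qed

lemma edges_pow4_le_induced_C4:
  assumes "Kss_free V E s" "2 \<le> s" "E \<noteq> {}"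
    and "2 * real (card V) \<le> real (card E)"
    and "(6 ^ s * real s) ^ 2 * real (card V) ^ 3 \<le> real (card E) ^ 2"
  shows "real (card E) ^ 4 \<le> 16 * real (card V) ^ 4 * real (num_induced_C4 V E)"
proof -
  define P where "P = (\<Sum>(u, v)\<in>distinct_pairs V. real (card (common_nbhd u v)))"
  define n where "n = real (card V)"
  define N where "N = real (num_induced_C4 V E)"
  have "0 < n"
    unfolding n_def using card_vertices_pos[OF assms(3)] by simp
  have edges: "3 * real (card E) ^ 2 \<le> n * P"
    unfolding P_def n_def using assms(4) by (rule edges_sq_le_sum_card_common_nbhd)
  have "4 * (1 + 2 * real (s * 16 ^ s)) * n ^ 3 \<le> 3 * ((6 ^ s * real s) ^ 2 * n ^ 3)"
    using mult_right_mono[OF sixteen_pow_le_six_pow_sq[OF assms(2)], of "n ^ 3"] \<open>0 < n\<close>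
    by (simp add: ac_simps)
  also have "\<dots> \<le> n * P"
    using assms(5) edges unfolding n_def by linarith
  finally have "n * (4 * (1 + 2 * real (s * 16 ^ s)) * n ^ 2) \<le> n * P"
    by (simp add: power2_eq_square power3_eq_cube ac_simps)
  then have "4 * (1 + 2 * real (s * 16 ^ s)) * n ^ 2 \<le> P"
    using \<open>0 < n\<close> by (simp only: mult_le_cancel_left_pos)
  then have "n ^ 2 * P ^ 2 \<le> n ^ 2 * (128 * n ^ 2 * N)"
    using sum_card_common_nbhd_sq_le_induced_C4[OF assms(1,2)] unfolding P_def n_def N_def
    by (intro mult_left_mono) simp_all
  moreover have "(3 * real (card E) ^ 2) ^ 2 \<le> (n * P) ^ 2"
    using edges by (rule power_mono) simp
  ultimately have "9 * real (card E) ^ 4 \<le> 128 * (n ^ 4 * N)"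
    by (simp add: power_mult_distrib power4_eq_xxxx power2_eq_square ac_simps flip: power_mult)
  moreover have "0 \<le> n ^ 4 * N"
    unfolding n_def N_def by simp
  ultimately show ?thesis
    unfolding n_def N_def by linarith
qed

end

theorem theorem5p2:
  fixes V :: "'a set" and E :: "'a set set" and s n :: nat
  assumes "simple_graph V E"
    and "s > 0"
    and "card V = n"
    and "Kss_free V E s"
    and "real (card E) > 6 ^ s * real s * real n powr (3/2)"
  shows "real (num_induced_C4 V E) \<ge> real (card E) ^ 4 / (16 * real n ^ 4)"
proof -
  interpret sgraph V E
    by (rule sgraph.intro) (rule assms(1))
  have "0 \<le> 6 ^ s * real s * real n powr (3/2)"
    by simp
  then have "E \<noteq> {}"
    using assms(5) by (auto simp: not_le[symmetric])
  then have "2 \<le> s"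
    using assms(2,4) Kss_free_one_imp_no_edges by (cases "s = 1") auto
  moreover have "1 \<le> real n"
    using card_vertices_pos[OF \<open>E \<noteq> {}\<close>] assms(3) by simp
  moreover have "2 \<le> 6 ^ s * real s"
    using \<open>2 \<le> s\<close> mult_mono[of 1 "6 ^ s" 2 "real s"] by simp
  ultimately have "2 * real n \<le> real (card E)" "(6 ^ s * real s) ^ 2 * real n ^ 3 \<le> real (card E) ^ 2"
    using powr_three_halves_bounds[of n] assms(5) by auto
  then have "real (card E) ^ 4 \<le> 16 * real n ^ 4 * real (num_induced_C4 V E)"
    using edges_pow4_le_induced_C4[OF assms(4) \<open>2 \<le> s\<close> \<open>E \<noteq> {}\<close>] unfolding assms(3) by blast
  then show ?thesis
    using \<open>1 \<le> real n\<close> by (simp add: divide_le_eq ac_simps)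
qed

end
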